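(* Let $C_{(\mathcal T,\Psi_{\mathcal T})}$ be a nested Archimedean copula with regularly varying generators, with tree $\mathcal T$ and generators $\psi_v\in\Psi_\infty$, regularly varying with index $-\alpha_v$, $\alpha_v>0$, $v\in\mathcal I$. Recursively define, for $v\in\mathcal V$, $$\Lambda_v(\bm x_{\mathrm{le}(v)})=\begin{cases}x_v,& v\in\mathcal L,\\ \left(\sum_{w\in\mathrm{ch}(v)}\Lambda_w(\bm x_{\mathrm{le}(w)})^{-1/\alpha_v}\right)^{-\alpha_v},& v\in\mathcal I.\end{cases}$$ Then for every $v\in\mathcal V$, the copula $C_v$ admits the tail copula $\Lambda(\cdot;C_v)=\Lambda_v(\cdot)$ on $(0,\infty)^{d(v)}$.
   Context: An Archimedean generator is a continuous, decreasing $\psi:[0,\infty)\to[0,1]$ with $\psi(0)=1$, $\lim_{t\to\infty}\psi(t)=0$, strictly decreasing on $[0,\inf\{t:\psi(t)=0\}]$, with inverse $\psi^{-1}$ ($\psi^{-1}(0)=\inf\{t:\psi(t)=0\}$); $\Psi_\infty$ is the set of completely monotone ones ($(-1)^k\psi^{(k)}\ge0$ for all $k$). $f:(0,\infty)\to(0,\infty)$ is regularly varying with index $\rho$ if $\lim_{x\to\infty}f(tx)/f(x)=t^\rho$ for all $t>0$. Let $\mathcal T=(\mathcal V,\mathcal E)$ be a rooted tree with root $r$, leaf set $\mathcal L=\{1,\dots,d\}$, internal vertices $\mathcal I=\mathcal V\setminus\mathcal L$; $\mathrm{pa}(v)$ is the parent of $v$, $\mathrm{ch}(v)$ the set of children,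 $\mathrm{le}(v)$ the set of leaves of the subtree rooted at $v$ (with $\mathrm{le}(v)=\{v\}$ for leaves), $d(v)=|\mathrm{le}(v)|$. Given generators $\Psi_{\mathcal T}=\{\psi_v\}_{v\in\mathcal I}\subseteq\Psi_\infty$, recursively set $C_v(\bm u_{\mathrm{le}(v)})=u_v$ for $v\in\mathcal L$ and $C_v(\bm u_{\mathrm{le}(v)})=\psi_v\left(\sum_{w\in\mathrm{ch}(v)}\psi_v^{-1}(C_w(\bm u_{\mathrm{le}(w)}))\right)$ for $v\in\mathcal I$; the nested Archimedean copula is $C_{(\mathcal T,\Psi_{\mathcal T})}=C_r$. It is assumed that the sufficient nesting condition holds: $(\psi_{\mathrm{pa}(v)}^{-1}\circ\psi_v)'$ is completely monotone for every $v\in\mathcal I\setminus\{r\}$. It has regularly varying generators if each $\psi_v$, $v\in\mathcal I$, is regularly varying with index $-\alpha_v$ for some $\alpha_v>0$. The tail copula of a copula $C$ in dimension $k$ is $\Lambda(\bm x;C)=\lim_{t\downarrow0}C(t\bm x)/t$, $\bm x\in(0,\infty)^k$. *)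

theory Defs
  imports "HOL-Analysis.Analysis"
begin

text \<open>A rooted tree on the finite vertex set V with root r: every non-root vertex has
its parent in V and every vertex reaches the root by iterating the parent map
(this excludes cycles). The value of pa at the root is irrelevant.\<close>

definition is_rooted_tree :: "'a set \<Rightarrow> 'a \<Rightarrow> ('a \<Rightarrow> 'a) \<Rightarrow> bool" where
  "is_rooted_tree V r pa \<longleftrightarrow> finite V \<and> r \<in> V \<and> (\<forall>v\<in>V - {r}. pa v \<in> V)
     \<and> (\<forall>v\<in>V. \<exists>n. (pa ^^ n) v = r)"

definition children :: "'a set \<Rightarrow> 'a \<Rightarrow> ('a \<Rightarrow> 'a) \<Rightarrow> 'a \<Rightarrow> 'a set" where
  "children V r pa v = {w \<in> V. w \<noteq> r \<and> pa w = v}"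

definition leaves :: "'a set \<Rightarrow> 'a \<Rightarrow> ('a \<Rightarrow> 'a) \<Rightarrow> 'a set" where
  "leaves V r pa = {v \<in> V. children V r pa v = {}}"

definition internal :: "'a set \<Rightarrow> 'a \<Rightarrow> ('a \<Rightarrow> 'a) \<Rightarrow> 'a set" where
  "internal V r pa = V - leaves V r pa"

definition leaves_below :: "'a set \<Rightarrow> 'a \<Rightarrow> ('a \<Rightarrow> 'a) \<Rightarrow> 'a \<Rightarrow> 'a set" where
  "leaves_below V r pa v = {l \<in> leaves V r pa. \<exists>n. (pa ^^ n) l = v}"

text \<open>The fuel argument is
taken to be card V, which exceeds the height of every vertex.\<close>
fun tree_rec :: "nat \<Rightarrow> ('a \<Rightarrow> 'a set) \<Rightarrow> ('a \<Rightarrow> ('a \<Rightarrow> real) \<Rightarrow> real)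
                 \<Rightarrow> ('a \<Rightarrow> real) \<Rightarrow> 'a \<Rightarrow> real" where
  "tree_rec 0 ch comb x v = x v"
| "tree_rec (Suc n) ch comb x v =
     (if ch v = {} then x v else comb v (tree_rec n ch comb x))"

definition gen_inv :: "(real \<Rightarrow> real) \<Rightarrow> real \<Rightarrow> real" where
  "gen_inv \<psi> y = (if y = 0 then Inf {t. 0 \<le> t \<and> \<psi> t = 0}
                   else (THE t. 0 \<le> t \<and> \<psi> t = y))"

definition archimedean_generator :: "(real \<Rightarrow> real) \<Rightarrow> bool" where
  "archimedean_generator \<psi> \<longleftrightarrow>
     continuous_on {0..} \<psi> \<and> (\<forall>t\<ge>0. 0 \<le> \<psi> t \<and> \<psi> t \<le> 1) \<and> \<psi> 0 = 1
     \<and> (\<psi> \<longlongrightarrow> 0) at_top \<and> antimono_on {0..} \<psi>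
     \<and> strict_antimono_on
         (if {t. 0 \<le> t \<and> \<psi> t = 0} = {} then {0..}
          else {0..Inf {t. 0 \<le> t \<and> \<psi> t = 0}}) \<psi>"

definition completely_monotone :: "(real \<Rightarrow> real) \<Rightarrow> bool" where
  "completely_monotone f \<longleftrightarrow>
     (\<forall>k. \<forall>t>0. ((deriv ^^ k) f has_real_derivative (deriv ^^ Suc k) f t) (at t))
     \<and> (\<forall>k. \<forall>t>0. (-1) ^ k * (deriv ^^ k) f t \<ge> 0)"

definition nesting_condition :: "(real \<Rightarrow> real) \<Rightarrow> (real \<Rightarrow> real) \<Rightarrow> bool" where
  "nesting_condition \<phi> \<psi> \<longleftrightarrow>
     (\<forall>t>0. ((\<lambda>s. gen_inv \<phi> (\<psi> s)) has_real_derivative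
              deriv (\<lambda>s. gen_inv \<phi> (\<psi> s)) t) (at t))
     \<and> completely_monotone (deriv (\<lambda>s. gen_inv \<phi> (\<psi> s)))"

definition regularly_varying :: "(real \<Rightarrow> real) \<Rightarrow> real \<Rightarrow> bool" where
  "regularly_varying f \<rho> \<longleftrightarrow> (\<forall>x>0. f x > 0) \<and>
     (\<forall>t>0. ((\<lambda>x. f (t * x) / f x) \<longlongrightarrow> t powr \<rho>) at_top)"

definition nac :: "'a set \<Rightarrow> 'a \<Rightarrow> ('a \<Rightarrow> 'a) \<Rightarrow> ('a \<Rightarrow> real \<Rightarrow> real)
                   \<Rightarrow> 'a \<Rightarrow> ('a \<Rightarrow> real) \<Rightarrow> real" where
  "nac V r pa \<psi> v u = tree_rec (card V) (children V r pa)
     (\<lambda>v g. \<psi> v (\<Sum>w\<in>children V r pa v. gen_inv (\<psi> v) (g w))) u v"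

definition tail_nac :: "'a set \<Rightarrow> 'a \<Rightarrow> ('a \<Rightarrow> 'a) \<Rightarrow> ('a \<Rightarrow> real)
                   \<Rightarrow> 'a \<Rightarrow> ('a \<Rightarrow> real) \<Rightarrow> real" where
  "tail_nac V r pa \<alpha> v x = tree_rec (card V) (children V r pa)
     (\<lambda>v g. (\<Sum>w\<in>children V r pa v. g w powr (-1 / \<alpha> v)) powr (- \<alpha> v)) x v"

end

(*
  The tail limit is propagated from the leaves to the root. At an internal vertex v
  the inverse generator is regularly varying at 0 with index -1/alpha_v, so
  gen_inv psi_v (C_w(t x)) / gen_inv psi_v t tends to Lambda_w(x)^(-1/alpha_v) for every
  child w. Summing over the children and using the regular variation of psi_v at the
  diverging point gen_inv psi_v t, where psi_v (gen_inv psi_v t) = t, gives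
  C_v(t x) / t --> Lambda_v(x). Both uses of regular variation need arguments that are
  only asymptotically proportional; monotonicity of the generators supplies this by
  sandwiching.
*)

theory Submission
  imports Defs
begin

text \<open>Positivity (implied by regular variation) makes the generator strictly decreasing on
  all of \<open>[0, \<infinity>)\<close>, so \<^const>\<open>gen_inv\<close> is a genuine inverse on \<open>(0, 1]\<close>.\<close>

context
  fixes \<psi> :: "real \<Rightarrow> real"
  assumes gen: "archimedean_generator \<psi>" and pos: "\<forall>x>0. 0 < \<psi> x"
begin

lemma generator_inj_on: "inj_on \<psi> {0..}"
proof -
  have "{t. 0 \<le> t \<and> \<psi> t = 0} = {}"
    using gen pos unfolding archimedean_generator_def by (force simp: order_le_less)
  then have "strict_antimono_on {0..} \<psi>"
    using gen unfolding archimedean_generator_def by simp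
  then show ?thesis using strict_antimono_iff_antimono by blast
qed

lemma generator_antimono: "0 \<le> s \<Longrightarrow> s \<le> u \<Longrightarrow> \<psi> u \<le> \<psi> s"
  using gen unfolding archimedean_generator_def monotone_on_def by auto

lemma generator_less_imp_greater:
  assumes "0 \<le> s" "0 \<le> u" "\<psi> u < \<psi> s"
  shows "s < u"
  using generator_antimono[of u s] assms by (meson leD not_less)

lemma generator_gen_inv:
  assumes "0 < y" "y \<le> 1"
  shows "0 \<le> gen_inv \<psi> y" "\<psi> (gen_inv \<psi> y) = y"
proof -
  have lim: "(\<psi> \<longlongrightarrow> 0) at_top" and cont: "continuous_on {0..} \<psi>" and one: "\<psi> 0 = 1"
    using gen unfolding archimedean_generator_def by blast+
  obtain T where T: "0 \<le> T" "\<psi> T < y"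
  proof -
    have "\<forall>\<^sub>F x in at_top. 0 \<le> x \<and> \<psi> x < y"
      using eventually_ge_at_top order_tendstoD(2)[OF lim \<open>0 < y\<close>] by (rule eventually_conj)
    then show ?thesis using that eventually_happens'[OF trivial_limit_at_top_linorder] by blast
  qed
  have "continuous_on {0..T} \<psi>" using cont by (rule continuous_on_subset) auto
  then obtain s where s: "0 \<le> s" "\<psi> s = y"
    using IVT2'[of \<psi> T y 0] T assms one by auto
  have "u = s" if "0 \<le> u \<and> \<psi> u = y" for u
    using generator_inj_on s that by (auto dest: inj_onD)
  then have "(THE t. 0 \<le> t \<and> \<psi> t = y) = s"
    using s by (intro the_equality) blast+
  then have "gen_inv \<psi> y = s"
    using assms by (simp add: gen_inv_def)
  then show "0 \<le> gen_inv \<psi> y" "\<psi> (gen_inv \<psi> y) = y" using s by auto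
qed

lemma filterlim_gen_inv_at_right_0: "filterlim (gen_inv \<psi>) at_top (at_right 0)"
  unfolding filterlim_at_top
proof
  fix Z :: real
  define Z' where "Z' = max Z 1"
  have "0 < \<psi> Z'" using pos unfolding Z'_def by simp
  then have "\<forall>\<^sub>F t in at_right 0. 0 < t \<and> t < min (\<psi> Z') 1"
    unfolding eventually_at_right_field by (intro exI[of _ "min (\<psi> Z') 1"]) auto
  then show "\<forall>\<^sub>F t in at_right 0. Z \<le> gen_inv \<psi> t"
  proof eventually_elim
    case (elim t)
    then have "0 \<le> gen_inv \<psi> t" "\<psi> (gen_inv \<psi> t) < \<psi> Z'"
      using generator_gen_inv by auto
    then have "Z' < gen_inv \<psi> t"
      using generator_less_imp_greater[of Z' "gen_inv \<psi> t"] by (simp add: Z'_def)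
    then show ?case unfolding Z'_def by simp
  qed
qed

lemma eventually_gen_inv_less_scaled:
  assumes a_unit: "\<forall>\<^sub>F t in at_right 0. 0 < a t \<and> a t \<le> 1"
    and "((\<lambda>t. \<psi> (d * gen_inv \<psi> t) / t) \<longlongrightarrow> m) (at_right 0)"
    and "((\<lambda>t. a t / t) \<longlongrightarrow> L) (at_right 0)" and "m < L" and "0 \<le> d"
  shows "\<forall>\<^sub>F t in at_right 0. gen_inv \<psi> (a t) < d * gen_inv \<psi> t"
proof -
  have "\<forall>\<^sub>F t in at_right 0. \<psi> (d * gen_inv \<psi> t) / t - a t / t < 0"
    using assms(2-4) by (intro order_tendstoD(2)[OF tendsto_diff]) auto
  with a_unit eventually_at_right_real[OF zero_less_one] show ?thesis
  proof eventually_elim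
    case (elim t)
    then have "\<psi> (d * gen_inv \<psi> t) < \<psi> (gen_inv \<psi> (a t))"
      by (simp add: generator_gen_inv diff_divide_distrib[symmetric] divide_less_0_iff)
    then show ?case
      using generator_less_imp_greater generator_gen_inv elim \<open>0 \<le> d\<close> by simp
  qed
qed

lemma eventually_scaled_less_gen_inv:
  assumes a_unit: "\<forall>\<^sub>F t in at_right 0. 0 < a t \<and> a t \<le> 1"
    and "((\<lambda>t. \<psi> (d * gen_inv \<psi> t) / t) \<longlongrightarrow> m) (at_right 0)"
    and "((\<lambda>t. a t / t) \<longlongrightarrow> L) (at_right 0)" and "L < m" and "0 \<le> d"
  shows "\<forall>\<^sub>F t in at_right 0. d * gen_inv \<psi> t < gen_inv \<psi> (a t)"
proof -
  have "\<forall>\<^sub>F t in at_right 0. 0 < \<psi> (d * gen_inv \<psi> t) / t - a t / t"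
    using assms(2-4) by (intro order_tendstoD(1)[OF tendsto_diff]) auto
  with a_unit eventually_at_right_real[OF zero_less_one] show ?thesis
  proof eventually_elim
    case (elim t)
    then have "\<psi> (gen_inv \<psi> (a t)) < \<psi> (d * gen_inv \<psi> t)"
      by (simp add: generator_gen_inv diff_divide_distrib[symmetric] zero_less_divide_iff)
    then show ?case
      using generator_less_imp_greater generator_gen_inv elim \<open>0 \<le> d\<close> by simp
  qed
qed

end

section \<open>Regular variation along asymptotically proportional arguments\<close>

lemma exists_gt_less_powr:
  fixes c :: real
  assumes "0 < c" "a < c powr \<rho>"
  shows "\<exists>d>c. a < d powr \<rho>"
proof -
  have "((\<lambda>d. d powr \<rho>) \<longlongrightarrow> c powr \<rho>) (at_right c)"
    using \<open>0 < c\<close> by (intro tendsto_intros) auto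
  then have "\<forall>\<^sub>F d in at_right c. c < d \<and> a < d powr \<rho>"
    by (intro eventually_conj eventually_at_right_less order_tendstoD(1)[OF _ assms(2)])
  then show ?thesis
    using eventually_happens'[OF trivial_limit_at_right_real] by blast
qed

lemma exists_pos_less_powr_less:
  fixes c :: real
  assumes "0 < c" "c powr \<rho> < a"
  shows "\<exists>d. 0 < d \<and> d < c \<and> d powr \<rho> < a"
proof -
  have "((\<lambda>d. d powr \<rho>) \<longlongrightarrow> c powr \<rho>) (at_left c)"
    using \<open>0 < c\<close> by (intro tendsto_intros) auto
  then have "\<forall>\<^sub>F d in at_left c. d \<in> {0<..<c} \<and> d powr \<rho> < a"
    by (intro eventually_conj eventually_at_left_real[OF \<open>0 < c\<close>] order_tendstoD(2)[OF _ assms(2)])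
  then show ?thesis
    using eventually_happens'[OF trivial_limit_at_left_real] by auto
qed

text \<open>Sandwich \<open>Y\<close> between \<open>d * X\<close> for \<open>d\<close> slightly below and slightly above \<open>c\<close>.\<close>

lemma regularly_varying_ratio_tendsto:
  fixes g :: "real \<Rightarrow> real" and X Y :: "'b \<Rightarrow> real"
  assumes rv: "regularly_varying g \<rho>" and mono: "antimono_on {0..} g"
    and X: "filterlim X at_top F" and Y: "((\<lambda>t. Y t / X t) \<longlongrightarrow> c) F" and "0 < c"
  shows "((\<lambda>t. g (Y t) / g (X t)) \<longlongrightarrow> c powr \<rho>) F"
proof -
  have pos: "\<forall>x>0. 0 < g x" and rv_lim: "\<forall>d>0. ((\<lambda>x. g (d * x) / g x) \<longlongrightarrow> d powr \<rho>) at_top"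
    using rv unfolding regularly_varying_def by auto
  have ratio: "((\<lambda>t. g (d * X t) / g (X t)) \<longlongrightarrow> d powr \<rho>) F" if "0 < d" for d
    using filterlim_compose[OF rv_lim[rule_format, OF that] X] .
  have X_pos: "\<forall>\<^sub>F t in F. 0 < X t"
    using X by (simp add: filterlim_at_top_dense)
  have "\<forall>\<^sub>F t in F. 0 < Y t / X t"
    using Y \<open>0 < c\<close> by (rule order_tendstoD)
  with X_pos have Y_pos: "\<forall>\<^sub>F t in F. 0 < Y t"
    by eventually_elim (simp add: zero_less_divide_iff)
  have g_ratio_mono: "g u / g (X t) \<le> g s / g (X t)" if "0 < X t" "0 < s" "s \<le> u" for s u t
    using mono pos that by (intro divide_right_mono) (auto simp: monotone_on_def less_imp_le)
  show ?thesis
  proof (rule order_tendstoI)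
    fix a assume "a < c powr \<rho>"
    then obtain d where d: "c < d" "a < d powr \<rho>"
      using exists_gt_less_powr \<open>0 < c\<close> by blast
    have "\<forall>\<^sub>F t in F. Y t / X t < d"
      using Y d(1) by (rule order_tendstoD)
    moreover have "\<forall>\<^sub>F t in F. a < g (d * X t) / g (X t)"
      using ratio d \<open>0 < c\<close> by (intro order_tendstoD) auto
    ultimately show "\<forall>\<^sub>F t in F. a < g (Y t) / g (X t)"
      using X_pos Y_pos
    proof eventually_elim
      case (elim t)
      then have "Y t \<le> d * X t" by (simp add: divide_less_eq)
      then show ?case using g_ratio_mono[of t "Y t" "d * X t"] elim by linarith
    qed
  next
    fix a assume "c powr \<rho> < a"
    then obtain d where d: "0 < d" "d < c" "d powr \<rho> < a"
      using exists_pos_less_powr_less \<open>0 < c\<close> by blast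
    have "\<forall>\<^sub>F t in F. d < Y t / X t"
      using Y d(2) by (rule order_tendstoD)
    moreover have "\<forall>\<^sub>F t in F. g (d * X t) / g (X t) < a"
      using ratio d by (intro order_tendstoD) auto
    ultimately show "\<forall>\<^sub>F t in F. g (Y t) / g (X t) < a"
      using X_pos
    proof eventually_elim
      case (elim t)
      then have "d * X t \<le> Y t" by (simp add: less_divide_eq)
      then show ?case using g_ratio_mono[of t "d * X t" "Y t"] elim d(1) by auto
    qed
  qed
qed

lemma generator_scaled_gen_inv_tendsto:
  assumes gen: "archimedean_generator \<psi>" and rv: "regularly_varying \<psi> \<rho>" and "0 < d"
  shows "((\<lambda>t. \<psi> (d * gen_inv \<psi> t) / t) \<longlongrightarrow> d powr \<rho>) (at_right 0)"
proof (rule Lim_transform_eventually)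
  have pos: "\<forall>x>0. 0 < \<psi> x" and rv_lim: "((\<lambda>x. \<psi> (d * x) / \<psi> x) \<longlongrightarrow> d powr \<rho>) at_top"
    using rv \<open>0 < d\<close> unfolding regularly_varying_def by auto
  show "((\<lambda>t. \<psi> (d * gen_inv \<psi> t) / \<psi> (gen_inv \<psi> t)) \<longlongrightarrow> d powr \<rho>) (at_right 0)"
    using filterlim_compose[OF rv_lim filterlim_gen_inv_at_right_0[OF gen pos]] .
  show "\<forall>\<^sub>F t in at_right 0. \<psi> (d * gen_inv \<psi> t) / \<psi> (gen_inv \<psi> t) = \<psi> (d * gen_inv \<psi> t) / t"
    using eventually_at_right_real[OF zero_less_one]
    by eventually_elim (simp add: generator_gen_inv[OF gen pos])
qed

lemma eventually_in_unit_interval: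
  fixes a :: "real \<Rightarrow> real"
  assumes "((\<lambda>t. a t / t) \<longlongrightarrow> L) (at_right 0)" and "0 < L"
  shows "\<forall>\<^sub>F t in at_right 0. 0 < a t \<and> a t < 1"
proof -
  have "((\<lambda>t. a t / t * t) \<longlongrightarrow> L * 0) (at_right 0)"
    using assms(1) by (intro tendsto_mult tendsto_ident_at)
  then have "\<forall>\<^sub>F t in at_right 0. a t / t * t < 1"
    by (rule order_tendstoD) simp
  moreover have "\<forall>\<^sub>F t in at_right 0. 0 < a t / t"
    using assms by (rule order_tendstoD)
  ultimately show ?thesis
    using eventually_at_right_less by eventually_elim (auto simp: zero_less_divide_iff)
qed

lemma gen_inv_ratio_tendsto:
  assumes gen: "archimedean_generator \<psi>" and rv: "regularly_varying \<psi> (- \<alpha>)" and "0 < \<alpha>"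
    and a: "((\<lambda>t. a t / t) \<longlongrightarrow> L) (at_right 0)" and "0 < L"
  shows "((\<lambda>t. gen_inv \<psi> (a t) / gen_inv \<psi> t) \<longlongrightarrow> L powr (-1 / \<alpha>)) (at_right 0)"
proof -
  define \<phi> where "\<phi> = gen_inv \<psi>"
  define l where "l = L powr (-1 / \<alpha>)"
  have pos: "\<forall>x>0. 0 < \<psi> x"
    using rv unfolding regularly_varying_def by auto
  have \<phi>_pos: "\<forall>\<^sub>F t in at_right 0. 0 < \<phi> t"
    using filterlim_gen_inv_at_right_0[OF gen pos] unfolding \<phi>_def
    by (simp add: filterlim_at_top_dense)
  have a_unit: "\<forall>\<^sub>F t in at_right 0. 0 < a t \<and> a t \<le> 1"
    using eventually_in_unit_interval[OF a \<open>0 < L\<close>] by (auto elim: eventually_mono)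
  note scaled = generator_scaled_gen_inv_tendsto[OF gen rv]
  have "0 < l" and l_powr: "l powr (- \<alpha>) = L"
    unfolding l_def using \<open>0 < L\<close> \<open>0 < \<alpha>\<close> by (simp_all add: powr_powr)
  have powr_anti: "y powr (- \<alpha>) < x powr (- \<alpha>)" if "0 < x" "x < y" for x y
    using that \<open>0 < \<alpha>\<close> by (intro powr_less_mono2_neg) auto
  show ?thesis
    unfolding \<phi>_def[symmetric] l_def[symmetric]
  proof (rule order_tendstoI)
    fix c assume "l < c"
    define d where "d = (l + c) / 2"
    have d: "l < d" "d < c" using \<open>l < c\<close> unfolding d_def by auto
    have "\<forall>\<^sub>F t in at_right 0. \<phi> (a t) < d * \<phi> t"
      unfolding \<phi>_def using gen pos a_unit scaled a
      by (rule eventually_gen_inv_less_scaled) (use d \<open>0 < l\<close> powr_anti[of l d] l_powr in auto)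
    with \<phi>_pos show "\<forall>\<^sub>F t in at_right 0. \<phi> (a t) / \<phi> t < c"
    proof eventually_elim
      case (elim t)
      then have "\<phi> (a t) < c * \<phi> t" using mult_strict_right_mono[OF d(2) elim(1)] by linarith
      then show ?case using elim by (simp add: divide_less_eq)
    qed
  next
    fix c assume "c < l"
    define d where "d = (max c 0 + l) / 2"
    have d: "0 < d" "c < d" "d < l" using \<open>c < l\<close> \<open>0 < l\<close> unfolding d_def by auto
    have "\<forall>\<^sub>F t in at_right 0. d * \<phi> t < \<phi> (a t)"
      unfolding \<phi>_def using gen pos a_unit scaled a
      by (rule eventually_scaled_less_gen_inv) (use d powr_anti[of d l] l_powr in auto)
    with \<phi>_pos show "\<forall>\<^sub>F t in at_right 0. c < \<phi> (a t) / \<phi> t"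
    proof eventually_elim
      case (elim t)
      then have "c * \<phi> t < \<phi> (a t)" using mult_strict_right_mono[OF d(2) elim(1)] by linarith
      then show ?case using elim by (simp add: less_divide_eq)
    qed
  qed
qed

lemma tail_limit_archimedean_combination:
  assumes gen: "archimedean_generator \<psi>" and rv: "regularly_varying \<psi> (- \<alpha>)" and "0 < \<alpha>"
    and "finite W" "W \<noteq> {}"
    and a: "\<And>w. w \<in> W \<Longrightarrow> ((\<lambda>t. a w t / t) \<longlongrightarrow> L w) (at_right 0)"
    and L: "\<And>w. w \<in> W \<Longrightarrow> 0 < L w"
  shows "((\<lambda>t. \<psi> (\<Sum>w\<in>W. gen_inv \<psi> (a w t)) / t)
           \<longlongrightarrow> (\<Sum>w\<in>W. L w powr (-1 / \<alpha>)) powr (- \<alpha>)) (at_right 0)"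
proof (rule Lim_transform_eventually)
  have pos: "\<forall>x>0. 0 < \<psi> x"
    using rv unfolding regularly_varying_def by auto
  have "((\<lambda>t. \<Sum>w\<in>W. gen_inv \<psi> (a w t) / gen_inv \<psi> t) \<longlongrightarrow> (\<Sum>w\<in>W. L w powr (-1 / \<alpha>))) (at_right 0)"
    using gen_inv_ratio_tendsto[OF gen rv \<open>0 < \<alpha>\<close> a L] by (rule tendsto_sum)
  then have sum_ratio: "((\<lambda>t. (\<Sum>w\<in>W. gen_inv \<psi> (a w t)) / gen_inv \<psi> t)
                         \<longlongrightarrow> (\<Sum>w\<in>W. L w powr (-1 / \<alpha>))) (at_right 0)"
    by (simp add: sum_divide_distrib)
  have "0 < (\<Sum>w\<in>W. L w powr (-1 / \<alpha>))"
    using L \<open>finite W\<close> \<open>W \<noteq> {}\<close> by (intro sum_pos) (auto dest: L)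
  moreover have "antimono_on {0..} \<psi>"
    using gen unfolding archimedean_generator_def by blast
  ultimately show "((\<lambda>t. \<psi> (\<Sum>w\<in>W. gen_inv \<psi> (a w t)) / \<psi> (gen_inv \<psi> t))
                    \<longlongrightarrow> (\<Sum>w\<in>W. L w powr (-1 / \<alpha>)) powr (- \<alpha>)) (at_right 0)"
    using regularly_varying_ratio_tendsto[OF rv _ filterlim_gen_inv_at_right_0[OF gen pos] sum_ratio]
    by blast
  show "\<forall>\<^sub>F t in at_right 0. \<psi> (\<Sum>w\<in>W. gen_inv \<psi> (a w t)) / \<psi> (gen_inv \<psi> t)
                             = \<psi> (\<Sum>w\<in>W. gen_inv \<psi> (a w t)) / t"
    using eventually_at_right_real[OF zero_less_one]
    by eventually_elim (simp add: generator_gen_inv[OF gen pos])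
qed

section \<open>Recursion over a rooted tree\<close>

definition tree_depth :: "'a \<Rightarrow> ('a \<Rightarrow> 'a) \<Rightarrow> 'a \<Rightarrow> nat" where
  "tree_depth r pa v = (LEAST k. (pa ^^ k) v = r)"

lemma funpow_tree_depth:
  assumes "is_rooted_tree V r pa" "v \<in> V"
  shows "(pa ^^ tree_depth r pa v) v = r"
proof -
  have "\<exists>k. (pa ^^ k) v = r" using assms unfolding is_rooted_tree_def by blast
  then show ?thesis unfolding tree_depth_def by (rule LeastI_ex)
qed

lemma funpow_ne_root_below_depth: "k < tree_depth r pa v \<Longrightarrow> (pa ^^ k) v \<noteq> r"
  unfolding tree_depth_def using not_less_Least by blast

lemma tree_depth_child:
  assumes tree: "is_rooted_tree V r pa" and w: "w \<in> children V r pa v"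
  shows "tree_depth r pa w = Suc (tree_depth r pa v)"
proof -
  have "w \<in> V" "w \<noteq> r" "pa w = v" using w unfolding children_def by auto
  have "v \<in> V"
    using tree \<open>w \<in> V\<close> \<open>w \<noteq> r\<close> \<open>pa w = v\<close> unfolding is_rooted_tree_def by blast
  have shift: "(pa ^^ Suc k) w = (pa ^^ k) v" for k
    using \<open>pa w = v\<close> unfolding funpow_Suc_right comp_apply by simp
  have "tree_depth r pa w \<le> Suc (tree_depth r pa v)"
    unfolding tree_depth_def[of r pa w] using funpow_tree_depth[OF tree \<open>v \<in> V\<close>] shift
    by (intro Least_le) simp
  moreover have "tree_depth r pa w \<noteq> 0"
    using funpow_tree_depth[OF tree \<open>w \<in> V\<close>] \<open>w \<noteq> r\<close> by (metis funpow_0)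
  then obtain k where k: "tree_depth r pa w = Suc k" using not0_implies_Suc by blast
  then have "(pa ^^ k) v = r" using funpow_tree_depth[OF tree \<open>w \<in> V\<close>] shift by simp
  then have "tree_depth r pa v \<le> k" unfolding tree_depth_def by (rule Least_le)
  ultimately show ?thesis using k by simp
qed

lemma tree_depth_less_card:
  assumes tree: "is_rooted_tree V r pa" and "v \<in> V"
  shows "tree_depth r pa v < card V"
proof -
  define d where "d = tree_depth r pa v"
  have ancestor_in_V: "(pa ^^ i) v \<in> V" if "i \<le> d" for i
    using that
  proof (induction i)
    case (Suc i)
    then have "(pa ^^ i) v \<in> V - {r}"
      using funpow_ne_root_below_depth[of i r pa v] unfolding d_def by simp
    then show ?case using tree unfolding is_rooted_tree_def by simp
  qed (use \<open>v \<in> V\<close> in simp)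
  have "inj_on (\<lambda>i. (pa ^^ i) v) {..d}"
  proof (rule linorder_inj_onI')
    fix i j assume "i \<in> {..d}" "j \<in> {..d}" "i < j"
    show "(pa ^^ i) v \<noteq> (pa ^^ j) v"
    proof
      assume "(pa ^^ i) v = (pa ^^ j) v"
      then have "(pa ^^ (d - j + i)) v = (pa ^^ (d - j + j)) v" by (simp add: funpow_add)
      also have "\<dots> = r" using \<open>j \<in> {..d}\<close> funpow_tree_depth[OF tree \<open>v \<in> V\<close>] by (simp add: d_def)
      finally have "(pa ^^ (d - j + i)) v = r" .
      moreover have "d - j + i < d" using \<open>i < j\<close> \<open>j \<in> {..d}\<close> by simp
      ultimately show False using funpow_ne_root_below_depth[of "d - j + i" r pa v] d_def by simp
    qed
  qed
  then have "card {..d} \<le> card V"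
    using ancestor_in_V tree unfolding is_rooted_tree_def by (intro card_inj_on_le) auto
  then show ?thesis unfolding d_def by simp
qed

lemma rooted_tree_induct[consumes 2, case_names step]:
  assumes tree: "is_rooted_tree V r pa" and "v \<in> V"
    and step: "\<And>v. v \<in> V \<Longrightarrow> (\<And>w. w \<in> children V r pa v \<Longrightarrow> P w) \<Longrightarrow> P v"
  shows "P v"
  using \<open>v \<in> V\<close>
proof (induction v rule: measure_induct_rule[where f = "\<lambda>v. card V - tree_depth r pa v"])
  case (less v)
  show ?case
  proof (rule step[OF less.prems])
    fix w assume w: "w \<in> children V r pa v"
    then have "w \<in> V" unfolding children_def by simp
    have "card V - tree_depth r pa w < card V - tree_depth r pa v"
      using tree_depth_child[OF tree w] tree_depth_less_card[OF tree \<open>w \<in> V\<close>] by simp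
    then show "P w" using \<open>w \<in> V\<close> by (rule less.IH)
  qed
qed

text \<open>Paths from \<open>w\<close> down to a leaf have fewer than \<open>card V - tree_depth r pa w\<close> edges,
  so fuel \<open>n\<close> with \<open>card V \<le> n + tree_depth r pa w\<close> already reaches all leaves below \<open>w\<close>.\<close>

lemma tree_rec_enough_fuel:
  assumes tree: "is_rooted_tree V r pa"
    and local: "\<And>v g h. (\<And>w. w \<in> children V r pa v \<Longrightarrow> g w = h w) \<Longrightarrow> comb v g = comb v h"
    and "w \<in> V" "card V \<le> n + tree_depth r pa w" "n \<le> m"
  shows "tree_rec m (children V r pa) comb x w = tree_rec n (children V r pa) comb x w"
  using assms(3-5)
proof (induction n arbitrary: m w)
  case 0
  then show ?case using tree_depth_less_card[OF tree] by fastforce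
next
  case (Suc n)
  then obtain m' where m: "m = Suc m'" "n \<le> m'" by (cases m) auto
  have "tree_rec m' (children V r pa) comb x u = tree_rec n (children V r pa) comb x u"
    if "u \<in> children V r pa w" for u
  proof (rule Suc.IH)
    show "u \<in> V" using that unfolding children_def by simp
    show "card V \<le> n + tree_depth r pa u"
      using Suc.prems(2) tree_depth_child[OF tree that] by simp
  qed (use m in simp)
  then show ?case using m by (auto intro: local)
qed

lemma tree_rec_unfold:
  assumes tree: "is_rooted_tree V r pa"
    and local: "\<And>v g h. (\<And>w. w \<in> children V r pa v \<Longrightarrow> g w = h w) \<Longrightarrow> comb v g = comb v h"
    and "v \<in> V"
  shows "tree_rec (card V) (children V r pa) comb x v =
    (if children V r pa v = {} then x v else comb v (tree_rec (card V) (children V r pa) comb x))"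
proof -
  obtain n where n: "card V = Suc n"
    using tree_depth_less_card[OF tree \<open>v \<in> V\<close>] by (cases "card V") auto
  have "tree_rec n (children V r pa) comb x w = tree_rec (card V) (children V r pa) comb x w"
    if "w \<in> children V r pa v" for w
  proof (rule tree_rec_enough_fuel[OF tree local, symmetric])
    show "w \<in> V" using that unfolding children_def by simp
    show "card V \<le> n + tree_depth r pa w" using n tree_depth_child[OF tree that] by simp
  qed (use n in simp_all)
  then show ?thesis using n by (auto intro: local)
qed

lemma nac_unfold:
  assumes "is_rooted_tree V r pa" "v \<in> V"
  shows "nac V r pa \<psi> v u = (if children V r pa v = {} then u v
           else \<psi> v (\<Sum>w\<in>children V r pa v. gen_inv (\<psi> v) (nac V r pa \<psi> w u)))"
  unfolding nac_def by (rule tree_rec_unfold[OF assms(1) _ assms(2)]) (simp cong: sum.cong)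

lemma tail_nac_unfold:
  assumes "is_rooted_tree V r pa" "v \<in> V"
  shows "tail_nac V r pa \<alpha> v x = (if children V r pa v = {} then x v
           else (\<Sum>w\<in>children V r pa v. tail_nac V r pa \<alpha> w x powr (-1 / \<alpha> v)) powr (- \<alpha> v))"
  unfolding tail_nac_def by (rule tree_rec_unfold[OF assms(1) _ assms(2)]) (simp cong: sum.cong)

lemma leaf_in_leaves_below: "v \<in> leaves V r pa \<Longrightarrow> v \<in> leaves_below V r pa v"
  unfolding leaves_below_def by (auto intro: exI[of _ 0])

lemma leaves_below_child:
  assumes "w \<in> children V r pa v"
  shows "leaves_below V r pa w \<subseteq> leaves_below V r pa v"
proof
  fix l assume "l \<in> leaves_below V r pa w"
  then obtain k where "l \<in> leaves V r pa" "(pa ^^ k) l = w" unfolding leaves_below_def by blast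
  moreover have "pa w = v" using assms unfolding children_def by simp
  ultimately have "l \<in> leaves V r pa" "(pa ^^ Suc k) l = v" by simp_all
  then show "l \<in> leaves_below V r pa v" unfolding leaves_below_def by blast
qed

lemma nac_tail_copula:
  assumes tree: "is_rooted_tree V r pa"
    and gen: "\<forall>v\<in>internal V r pa. archimedean_generator (\<psi> v)"
    and rv: "\<forall>v\<in>internal V r pa. \<alpha> v > 0 \<and> regularly_varying (\<psi> v) (- \<alpha> v)"
    and "v \<in> V" and "\<forall>l\<in>leaves_below V r pa v. 0 < x l"
  shows "0 < tail_nac V r pa \<alpha> v x \<and>
    ((\<lambda>t. nac V r pa \<psi> v (\<lambda>l. t * x l) / t) \<longlongrightarrow> tail_nac V r pa \<alpha> v x) (at_right 0)"
  using tree \<open>v \<in> V\<close> assms(5)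
proof (induction v rule: rooted_tree_induct)
  case (step v)
  show ?case
  proof (cases "children V r pa v = {}")
    case True
    then have "v \<in> leaves_below V r pa v"
      using step.hyps by (intro leaf_in_leaves_below) (simp add: leaves_def)
    then have "0 < x v" using step.prems by blast
    moreover have "((\<lambda>t. t * x v / t) \<longlongrightarrow> x v) (at_right 0)"
      using eventually_at_right_less by (rule tendsto_eventually[OF eventually_mono]) simp
    ultimately show ?thesis
      using True by (simp add: nac_unfold[OF tree step.hyps] tail_nac_unfold[OF tree step.hyps])
  next
    case False
    then have "v \<in> internal V r pa" using step.hyps unfolding internal_def leaves_def by simp
    let ?L = "\<lambda>w. tail_nac V r pa \<alpha> w x"
    have IH: "0 < ?L w \<and> ((\<lambda>t. nac V r pa \<psi> w (\<lambda>l. t * x l) / t) \<longlongrightarrow> ?L w) (at_right 0)"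
      if "w \<in> children V r pa v" for w
    proof (rule step.IH[OF that])
      show "\<forall>l\<in>leaves_below V r pa w. 0 < x l"
        using step.prems leaves_below_child[OF that] by blast
    qed
    have "finite (children V r pa v)"
      using tree unfolding is_rooted_tree_def children_def by simp
    moreover have "0 < (\<Sum>w\<in>children V r pa v. ?L w powr (-1 / \<alpha> v))"
      using \<open>finite (children V r pa v)\<close> False by (intro sum_pos) (auto dest: IH)
    moreover have "((\<lambda>t. \<psi> v (\<Sum>w\<in>children V r pa v. gen_inv (\<psi> v) (nac V r pa \<psi> w (\<lambda>l. t * x l))) / t)
        \<longlongrightarrow> (\<Sum>w\<in>children V r pa v. ?L w powr (-1 / \<alpha> v)) powr (- \<alpha> v)) (at_right 0)"
      using gen rv \<open>v \<in> internal V r pa\<close> \<open>finite (children V r pa v)\<close> False IH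
      by (intro tail_limit_archimedean_combination) auto
    ultimately show ?thesis
      using False by (simp add: nac_unfold[OF tree step.hyps] tail_nac_unfold[OF tree step.hyps])
  qed
qed

theorem proposition4p5:
  fixes V :: "'a set" and r :: 'a and pa :: "'a \<Rightarrow> 'a"
    and \<psi> :: "'a \<Rightarrow> real \<Rightarrow> real" and \<alpha> :: "'a \<Rightarrow> real"
  assumes tree: "is_rooted_tree V r pa"
    and gen: "\<forall>v\<in>internal V r pa. archimedean_generator (\<psi> v) \<and> completely_monotone (\<psi> v)"
    and nest: "\<forall>v\<in>internal V r pa - {r}. nesting_condition (\<psi> (pa v)) (\<psi> v)"
    and rv: "\<forall>v\<in>internal V r pa. \<alpha> v > 0 \<and> regularly_varying (\<psi> v) (- \<alpha> v)"
  shows "\<forall>v\<in>V. \<forall>x. (\<forall>l\<in>leaves_below V r pa v. 0 < x l) \<longrightarrow>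
           ((\<lambda>t. nac V r pa \<psi> v (\<lambda>l. t * x l) / t) \<longlongrightarrow> tail_nac V r pa \<alpha> v x) (at_right 0)"
proof (intro ballI allI impI)
  \<comment> \<open>Complete monotonicity and the nesting condition make \<open>C\<^sub>r\<close> a copula.\<close>
  fix v and x :: "'a \<Rightarrow> real"
  assume "v \<in> V" and "\<forall>l\<in>leaves_below V r pa v. 0 < x l"
  have "\<forall>v\<in>internal V r pa. archimedean_generator (\<psi> v)"
    using gen by blast
  from nac_tail_copula[OF tree this rv \<open>v \<in> V\<close> \<open>\<forall>l\<in>leaves_below V r pa v. 0 < x l\<close>]
  show "((\<lambda>t. nac V r pa \<psi> v (\<lambda>l. t * x l) / t) \<longlongrightarrow> tail_nac V r pa \<alpha> v x) (at_right 0)"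
    by (rule conjunct2)
qed

end
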